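(* Let $(M,d)$ be a compact metric space, $\mu$ a probability measure on $M$, $k:M\times M\to[0,1]$ a measurable kernel, $M^s\subseteq M$ a measurable set, and $\rho>0$. Then there exists a unique measurable map $v^*:M\to[0,1]$ such that $v^*(x)=1$ for all $x\in M^s$ and, for all $x\in M\setminus M^s$, $$v^*(x)=\frac{\int_{M^s}k(x,y)\,d\mu(y)+\int_{M\setminus M^s}v^*(y)k(x,y)\,d\mu(y)}{\rho+\int_M k(x,y)\,d\mu(y)}.$$ *)

theory Defs
  imports "HOL-Probability.Probability"
begin

end

theory Submission
  imports Defs
begin

text \<open>Write \<open>T\<close> for the right-hand side of the equation, viewed as an operator on measurable
  functions \<open>M \<rightarrow> [0,1]\<close> (\<open>T v = 1\<close> on \<open>M\<^sup>s\<close>). \<open>T\<close> is monotone, so its iterates from \<open>0\<close>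
  increase to a function \<open>v\<^sup>*\<close>, and dominated convergence shows \<open>T v\<^sup>* = v\<^sup>*\<close>. Since
  \<open>|T v - T w| \<le> K/(\<rho> + K) \<cdot> sup |v - w|\<close> with \<open>K = \<integral> k(x,y) d\<mu>(y) \<le> \<mu>(M)\<close>, \<open>T\<close> is a
  contraction for the supremum distance and the fixed point is unique.\<close>

lemma bounded_eq_zero_if_contracting:
  fixes f :: "'a \<Rightarrow> real"
  assumes bdd: "bdd_above (range (\<lambda>x. \<bar>f x\<bar>))"
    and q: "q < 1"
    and contracting: "\<And>x S. (\<And>y. \<bar>f y\<bar> \<le> S) \<Longrightarrow> \<bar>f x\<bar> \<le> q * S"
  shows "f x = 0"
proof -
  define S where "S = (SUP y. \<bar>f y\<bar>)"
  have le_S: "\<bar>f y\<bar> \<le> S" for y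
    unfolding S_def using bdd by (rule cSUP_upper[OF UNIV_I])
  have "S \<le> q * S"
    unfolding S_def by (rule cSUP_least) (use contracting le_S S_def in auto)
  then have "(1 - q) * S \<le> 0"
    by (simp add: algebra_simps)
  then have "S \<le> 0"
    using q by (simp add: mult_le_0_iff)
  then show ?thesis
    using le_S[of x] by simp
qed

locale absorption_equation = finite_measure \<mu> for \<mu> :: "'a measure" +
  fixes k :: "'a \<Rightarrow> 'a \<Rightarrow> real" and Ms :: "'a set" and \<rho> :: real
  assumes space_eq: "space \<mu> = UNIV"
    and kernel_measurable[measurable]: "(\<lambda>(x, y). k x y) \<in> borel_measurable (\<mu> \<Otimes>\<^sub>M \<mu>)"
    and kernel_nonneg: "0 \<le> k x y"
    and kernel_le_one: "k x y \<le> 1"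
    and sets_Ms[measurable]: "Ms \<in> sets \<mu>"
    and rho_pos: "0 < \<rho>"
begin

lemma kernel_measurable_right[measurable]: "k x \<in> borel_measurable \<mu>"
  using measurable_Pair2[OF kernel_measurable, of x] space_eq by simp

lemma measurable_mult_kernel:
  assumes "g \<in> borel_measurable \<mu>"
  shows "(\<lambda>y. g y * k x y) \<in> borel_measurable \<mu>"
  using assms kernel_measurable_right by (rule borel_measurable_times)

definition candidate :: "('a \<Rightarrow> real) \<Rightarrow> bool" where
  "candidate v \<longleftrightarrow> v \<in> borel_measurable \<mu> \<and> (\<forall>x. 0 \<le> v x \<and> v x \<le> 1)"

definition kernel_integral :: "('a \<Rightarrow> real) \<Rightarrow> 'a \<Rightarrow> real" where
  "kernel_integral g x = (LINT y|\<mu>. g y * k x y)"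

definition absorb :: "('a \<Rightarrow> real) \<Rightarrow> 'a \<Rightarrow> real" where
  "absorb v y = (if y \<in> Ms then 1 else v y)"

definition step :: "('a \<Rightarrow> real) \<Rightarrow> 'a \<Rightarrow> real" where
  "step v x = (if x \<in> Ms then 1
     else kernel_integral (absorb v) x / (\<rho> + kernel_integral (\<lambda>_. 1) x))"

lemma candidate_const: "0 \<le> c \<Longrightarrow> c \<le> 1 \<Longrightarrow> candidate (\<lambda>_. c)"
  by (simp add: candidate_def)

lemma candidate_absorb: "candidate v \<Longrightarrow> candidate (absorb v)"
  unfolding candidate_def absorb_def by auto

lemma integrable_mult_kernel:
  assumes "candidate g"
  shows "integrable \<mu> (\<lambda>y. g y * k x y)"
proof (rule integrable_const_bound[where B = 1])
  show "(\<lambda>y. g y * k x y) \<in> borel_measurable \<mu>"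
    using assms by (simp add: candidate_def measurable_mult_kernel)
  show "AE y in \<mu>. norm (g y * k x y) \<le> 1"
    using assms kernel_nonneg kernel_le_one by (auto simp: candidate_def intro!: mult_le_one)
qed

lemma kernel_integral_mono:
  assumes "candidate g" "candidate h" "\<And>y. g y \<le> h y"
  shows "kernel_integral g x \<le> kernel_integral h x"
  unfolding kernel_integral_def
  using assms kernel_nonneg by (intro integral_mono integrable_mult_kernel mult_right_mono) auto

lemma kernel_integral_nonneg: "candidate g \<Longrightarrow> 0 \<le> kernel_integral g x"
  unfolding kernel_integral_def candidate_def using kernel_nonneg by simp

lemma kernel_integral_le_kernel_integral_one: "candidate g \<Longrightarrow> kernel_integral g x \<le> kernel_integral (\<lambda>_. 1) x"
  using kernel_integral_mono[of g "\<lambda>_. 1"] by (simp add: candidate_const candidate_def)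

lemma kernel_integral_one_le_measure: "kernel_integral (\<lambda>_. 1) x \<le> measure \<mu> (space \<mu>)"
proof -
  have "kernel_integral (\<lambda>_. 1) x \<le> (LINT y|\<mu>. 1)"
    unfolding kernel_integral_def using kernel_le_one
    by (intro integral_mono integrable_mult_kernel candidate_const) auto
  then show ?thesis by simp
qed

lemma kernel_integral_diff:
  assumes "candidate g" "candidate h" "\<And>y. \<bar>g y - h y\<bar> \<le> S"
  shows "\<bar>kernel_integral g x - kernel_integral h x\<bar> \<le> S * kernel_integral (\<lambda>_. 1) x"
proof -
  have "kernel_integral g x - kernel_integral h x = (LINT y|\<mu>. (g y - h y) * k x y)"
    unfolding kernel_integral_def left_diff_distrib
    using assms by (intro Bochner_Integration.integral_diff[symmetric] integrable_mult_kernel)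
  also have "\<bar>\<dots>\<bar> \<le> (LINT y|\<mu>. \<bar>(g y - h y) * k x y\<bar>)"
    by (rule integral_abs_bound)
  also have "\<dots> \<le> (LINT y|\<mu>. S * k x y)"
  proof (rule integral_mono)
    show "integrable \<mu> (\<lambda>y. \<bar>(g y - h y) * k x y\<bar>)"
      using assms by (simp add: left_diff_distrib integrable_mult_kernel)
    show "integrable \<mu> (\<lambda>y. S * k x y)"
      using integrable_mult_kernel[OF candidate_const[of 1]] by simp
    show "\<bar>(g y - h y) * k x y\<bar> \<le> S * k x y" for y
      using assms(3)[of y] kernel_nonneg[of x y] by (simp add: abs_mult mult_right_mono)
  qed
  finally show ?thesis
    by (simp add: kernel_integral_def)
qed

lemma tendsto_kernel_integral:
  assumes "\<And>n. candidate (g n)" "candidate g'" "\<And>y. (\<lambda>n. g n y) \<longlonglongrightarrow> g' y"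
  shows "(\<lambda>n. kernel_integral (g n) x) \<longlonglongrightarrow> kernel_integral g' x"
  unfolding kernel_integral_def
proof (rule integral_dominated_convergence[where w = "\<lambda>_. 1"])
  show "(\<lambda>y. g' y * k x y) \<in> borel_measurable \<mu>"
       "(\<lambda>y. g n y * k x y) \<in> borel_measurable \<mu>" for n
    using assms(1,2) by (simp_all add: candidate_def measurable_mult_kernel)
  show "AE y in \<mu>. (\<lambda>n. g n y * k x y) \<longlonglongrightarrow> g' y * k x y"
    using assms(3) by (intro always_eventually allI tendsto_intros)
  show "AE y in \<mu>. norm (g n y * k x y) \<le> 1" for n
    using assms(1)[of n] kernel_nonneg kernel_le_one
    by (auto simp: candidate_def intro!: mult_le_one)
qed simp

lemma step_denominator_pos: "0 < \<rho> + kernel_integral (\<lambda>_. 1) x"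
  by (intro add_pos_nonneg rho_pos kernel_integral_nonneg candidate_const) simp_all

lemma step_mono:
  assumes "candidate v" "candidate w" "\<And>y. v y \<le> w y"
  shows "step v x \<le> step w x"
  using assms kernel_integral_mono[of "absorb v" "absorb w" x] step_denominator_pos[of x]
  by (auto simp: step_def absorb_def candidate_absorb candidate_const divide_right_mono)

lemma candidate_step:
  assumes "candidate v"
  shows "candidate (step v)"
proof -
  have [measurable]: "v \<in> borel_measurable \<mu>"
    using assms by (simp add: candidate_def)
  have "step v \<in> borel_measurable \<mu>"
    unfolding step_def kernel_integral_def absorb_def by measurable
  moreover have "0 \<le> step v x \<and> step v x \<le> 1" for x
    using kernel_integral_nonneg[OF candidate_absorb[OF assms], of x]
      kernel_integral_le_kernel_integral_one[OF candidate_absorb[OF assms], of x]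
      step_denominator_pos[of x] rho_pos
    by (auto simp: step_def divide_le_eq)
  ultimately show ?thesis
    by (simp add: candidate_def)
qed

lemma step_contraction:
  assumes "candidate v" "candidate w" "\<And>y. \<bar>v y - w y\<bar> \<le> S"
  shows "\<bar>step v x - step w x\<bar>
           \<le> measure \<mu> (space \<mu>) / (\<rho> + measure \<mu> (space \<mu>)) * S"
proof -
  define K where "K = kernel_integral (\<lambda>_. 1) x"
  define C where "C = measure \<mu> (space \<mu>)"
  have K: "0 \<le> K" "K \<le> C"
    unfolding K_def C_def by (simp_all add: kernel_integral_nonneg candidate_const
        kernel_integral_one_le_measure)
  have S: "0 \<le> S"
    using assms(3) abs_ge_zero order_trans by blast
  have "\<bar>absorb v y - absorb w y\<bar> \<le> S" for y
    using assms(3) S by (simp add: absorb_def)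
  then have "\<bar>kernel_integral (absorb v) x - kernel_integral (absorb w) x\<bar> \<le> K * S"
    using kernel_integral_diff[OF candidate_absorb candidate_absorb, OF assms(1,2)]
    by (simp add: K_def mult.commute)
  then have "\<bar>step v x - step w x\<bar> \<le> K / (\<rho> + K) * S"
    using K S rho_pos
    by (simp add: step_def K_def divide_right_mono flip: diff_divide_distrib)
  also have "\<dots> \<le> C / (\<rho> + C) * S"
  proof -
    have "K * (\<rho> + C) \<le> C * (\<rho> + K)"
      using K rho_pos by (simp add: algebra_simps mult_left_mono)
    then have "K / (\<rho> + K) \<le> C / (\<rho> + C)"
      using K rho_pos by (simp add: divide_simps)
    then show ?thesis
      using S by (rule mult_right_mono)
  qed
  finally show ?thesis
    by (simp add: C_def)
qed

lemma step_fixed_point_unique: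
  assumes "candidate v" "candidate w" "step v = v" "step w = w"
  shows "v = w"
proof
  fix x
  define C where "C = measure \<mu> (space \<mu>)"
  have "0 < \<rho> + C"
    unfolding C_def using rho_pos measure_nonneg by (rule add_pos_nonneg)
  then have "C / (\<rho> + C) < 1"
    using rho_pos by (simp add: divide_less_eq)
  moreover have "bdd_above (range (\<lambda>y. \<bar>v y - w y\<bar>))"
  proof (rule bdd_aboveI2)
    fix y
    have "0 \<le> v y" "v y \<le> 1" "0 \<le> w y" "w y \<le> 1"
      using assms(1,2) by (simp_all add: candidate_def)
    then show "\<bar>v y - w y\<bar> \<le> 1"
      by linarith
  qed
  ultimately have "v x - w x = 0"
    using step_contraction[OF assms(1,2)] assms(3,4)
    by (intro bounded_eq_zero_if_contracting[where f = "\<lambda>y. v y - w y"]) (auto simp: C_def)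
  then show "v x = w x"
    by simp
qed

lemma tendsto_step:
  assumes "\<And>n. candidate (f n)" "candidate v" "\<And>y. (\<lambda>n. f n y) \<longlonglongrightarrow> v y"
  shows "(\<lambda>n. step (f n) x) \<longlonglongrightarrow> step v x"
proof -
  have "(\<lambda>n. absorb (f n) y) \<longlonglongrightarrow> absorb v y" for y
    using assms(3)[of y] by (simp add: absorb_def)
  then show ?thesis
    unfolding step_def using assms(1,2) step_denominator_pos[of x]
    by (cases "x \<in> Ms") (auto intro!: tendsto_intros tendsto_kernel_integral candidate_absorb)
qed

lemma candidate_step_iterate: "candidate ((step ^^ n) (\<lambda>_. 0))"
  by (induction n) (simp_all add: candidate_const candidate_step)

lemma incseq_step_iterate: "incseq (\<lambda>n. (step ^^ n) (\<lambda>_. 0) x)"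
proof (rule incseq_SucI)
  show "(step ^^ n) (\<lambda>_. 0) x \<le> (step ^^ Suc n) (\<lambda>_. 0) x" for n
  proof (induction n arbitrary: x)
    case 0
    then show ?case
      using candidate_step_iterate[of 1] by (simp add: candidate_def)
  next
    case (Suc n)
    then show ?case
      using candidate_step_iterate[of n] by (simp add: step_mono candidate_step)
  qed
qed

lemma step_fixed_point_exists: "\<exists>v. candidate v \<and> step v = v"
proof -
  define v where "v x = (SUP n. (step ^^ n) (\<lambda>_. 0) x)" for x
  have lim: "(\<lambda>n. (step ^^ n) (\<lambda>_. 0) x) \<longlonglongrightarrow> v x" for x
    unfolding v_def using candidate_step_iterate incseq_step_iterate
    by (intro LIMSEQ_incseq_SUP) (auto simp: candidate_def bdd_above_def)
  have "candidate v"
    unfolding candidate_def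
  proof (intro conjI allI)
    show "v \<in> borel_measurable \<mu>"
      using candidate_step_iterate
      by (intro borel_measurable_LIMSEQ_real[OF lim]) (simp add: candidate_def)
    show "0 \<le> v x" "v x \<le> 1" for x
      using candidate_step_iterate
      by (auto simp: candidate_def intro: LIMSEQ_le_const[OF lim] LIMSEQ_le_const2[OF lim])
  qed
  moreover have "step v x = v x" for x
  proof (rule LIMSEQ_unique)
    show "(\<lambda>n. step ((step ^^ n) (\<lambda>_. 0)) x) \<longlonglongrightarrow> step v x"
      using candidate_step_iterate \<open>candidate v\<close> lim by (rule tendsto_step)
    show "(\<lambda>n. step ((step ^^ n) (\<lambda>_. 0)) x) \<longlonglongrightarrow> v x"
      using LIMSEQ_Suc[OF lim[of x]] by simp
  qed
  ultimately show ?thesis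
    by auto
qed

lemma set_integrals_eq_kernel_integral:
  assumes "candidate v"
  shows "(LINT y:Ms|\<mu>. k x y) + (LINT y:(UNIV - Ms)|\<mu>. v y * k x y)
           = kernel_integral (absorb v) x"
proof -
  have "integrable \<mu> (k x)"
    using integrable_mult_kernel[OF candidate_const[of 1]] by simp
  then have "integrable \<mu> (\<lambda>y. indicator Ms y * k x y)"
    using integrable_mult_indicator[OF sets_Ms, of "k x"] by simp
  moreover have "integrable \<mu> (\<lambda>y. indicator (UNIV - Ms) y * (v y * k x y))"
    using integrable_mult_indicator[OF _ integrable_mult_kernel[OF assms]]
      sets.compl_sets[OF sets_Ms] space_eq
    by simp
  ultimately have "(LINT y|\<mu>. indicator Ms y * k x y)
      + (LINT y|\<mu>. indicator (UNIV - Ms) y * (v y * k x y))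
      = (LINT y|\<mu>. indicator Ms y * k x y + indicator (UNIV - Ms) y * (v y * k x y))"
    by (rule Bochner_Integration.integral_add[symmetric])
  also have "\<dots> = kernel_integral (absorb v) x"
    unfolding kernel_integral_def absorb_def
    by (intro Bochner_Integration.integral_cong) (auto simp: indicator_def)
  finally show ?thesis
    by (simp add: set_lebesgue_integral_def)
qed

lemma candidate_fixed_point_iff:
  "candidate v \<and> step v = v \<longleftrightarrow>
     v \<in> borel_measurable \<mu> \<and>
     (\<forall>x. 0 \<le> v x \<and> v x \<le> 1) \<and>
     (\<forall>x\<in>Ms. v x = 1) \<and>
     (\<forall>x\<in>UNIV - Ms. v x =
        ((LINT y:Ms|\<mu>. k x y) + (LINT y:(UNIV - Ms)|\<mu>. v y * k x y))
        / (\<rho> + (LINT y|\<mu>. k x y)))"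
proof (cases "candidate v")
  case True
  then show ?thesis
    using set_integrals_eq_kernel_integral[OF True]
    by (auto simp: candidate_def fun_eq_iff step_def kernel_integral_def)
qed (auto simp: candidate_def)

end

theorem theorem1:
  fixes \<mu> :: "'a::metric_space measure"
    and k :: "'a \<Rightarrow> 'a \<Rightarrow> real"
    and Ms :: "'a set"
    and \<rho> :: real
  assumes "compact (UNIV :: 'a set)"
    and "sets \<mu> = sets borel"
    and "prob_space \<mu>"
    and "(\<lambda>(x, y). k x y) \<in> borel_measurable (\<mu> \<Otimes>\<^sub>M \<mu>)"
    and "\<And>x y. 0 \<le> k x y \<and> k x y \<le> 1"
    and "Ms \<in> sets borel"
    and "\<rho> > 0"
  shows "\<exists>!v :: 'a \<Rightarrow> real.
           v \<in> borel_measurable \<mu> \<and>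
           (\<forall>x. 0 \<le> v x \<and> v x \<le> 1) \<and>
           (\<forall>x\<in>Ms. v x = 1) \<and>
           (\<forall>x\<in>UNIV - Ms. v x =
              ((LINT y:Ms|\<mu>. k x y) + (LINT y:(UNIV - Ms)|\<mu>. v y * k x y))
              / (\<rho> + (LINT y|\<mu>. k x y)))"
proof -
  interpret prob_space \<mu>
    by (fact assms(3))
  interpret absorption_equation \<mu> k Ms \<rho>
  proof
    show "space \<mu> = UNIV"
      using assms(2) sets_eq_imp_space_eq by fastforce
    show "Ms \<in> sets \<mu>"
      using assms(2,6) by simp
  qed (use assms(4,5,7) in simp_all)
  show ?thesis
    unfolding candidate_fixed_point_iff[symmetric]
    using step_fixed_point_exists step_fixed_point_unique by blast
qed

end
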